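(* Let $r\geqslant 3$ be an odd integer and let $\Gamma\cong\mathbb{Z}_{2r}\oplus\mathbb{Z}_8$. Then there exists an $\mathrm{MRS}_\Gamma(r,8;2)$ in which every row sum and every column sum equals $0_\Gamma$.
   Context: For an abelian group $\Gamma$ of order $abc$, an $\mathrm{MRS}_\Gamma(a,b;c)$ is a collection of $c$ arrays of size $a\times b$ whose entries are the elements of $\Gamma$, each appearing exactly once and in a unique array, such that there are $\omega,\delta\in\Gamma$ with every row sum (in every array) equal to $\omega$ and every column sum (in every array) equal to $\delta$. *)

theory Defs
  imports "HOL-Algebra.Algebra"
begin

text \<open>An MRS_G(a,b;c) in an abelian group G (written multiplicatively in HOL-Algebra,
  so the group operation is the paper's addition and \<one> is 0_G).\<close>

definition MRS :: "('g, 'm) monoid_scheme \<Rightarrow> nat \<Rightarrow> nat \<Rightarrow> nat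
                   \<Rightarrow> (nat \<Rightarrow> nat \<Rightarrow> nat \<Rightarrow> 'g) \<Rightarrow> 'g \<Rightarrow> 'g \<Rightarrow> bool" where
  "MRS G a b c A \<omega> \<delta> \<longleftrightarrow>
     card (carrier G) = a * b * c \<and>
     bij_betw (\<lambda>(k, i, j). A k i j) ({..<c} \<times> {..<a} \<times> {..<b}) (carrier G) \<and>
     (\<forall>k<c. \<forall>i<a. finprod G (\<lambda>j. A k i j) {..<b} = \<omega>) \<and>
     (\<forall>k<c. \<forall>j<b. finprod G (\<lambda>i. A k i j) {..<a} = \<delta>)"

end

theory Submission
  imports Defs
begin

text \<open>Since r is odd, Z_2r = Z_r x Z_2 and the group is Z_r x (Z_2 x Z_8). Entry (i, j) of
  array k is (+i, t) in the first four columns and (-i, t) in the last four, with t in Z_2 x Z_8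
  taken from one of five template rows according to the type of row i. The signs cancel along
  each row, and each column sums in Z_r to 0 + 1 + ... + (r - 1) = 0. The Z_2 x Z_8 parts sum to
  zero along template rows, and down the columns because types 0, 1, 2 occur once each and types
  3 and 4 equally often. Rows i and r - i have partner types, so the entries with first
  coordinate v are the left half of row v and the right half of row r - v: every element occurs
  exactly once as soon as, for each type s, the left half of template s and the right half of
  its partner carry sixteen distinct labels, which is a finite check.\<close>

lemma hom_finprod:
  assumes "comm_group H" and "comm_group G" and "h \<in> hom H G" and "f \<in> I \<rightarrow> carrier H"
  shows "h (finprod H f I) = finprod G (h \<circ> f) I"
proof -
  interpret H: comm_group H by fact
  interpret G: comm_group G by fact
  interpret group_hom H G h
    by (intro group_hom.intro group_hom_axioms.intro H.is_group G.is_group assms(3))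
  show ?thesis
  proof (cases "finite I")
    case True
    then show ?thesis using assms(4)
    proof (induction I rule: finite_induct)
      case (insert x F)
      then have "(\<lambda>a. h (f a)) \<in> F \<rightarrow> carrier G" and "h (f x) \<in> carrier G"
        by (auto simp: Pi_iff)
      with insert show ?case by (simp add: o_def)
    qed simp
  qed simp
qed

lemma comm_group_DirProd: "comm_group G \<Longrightarrow> comm_group H \<Longrightarrow> comm_group (G \<times>\<times> H)"
  by (auto simp: comm_group_def comm_monoid_def comm_monoid_axioms_def group.axioms
      intro: DirProd_group DirProd_monoid)

lemma finprod_DirProd:
  assumes "comm_group G" and "comm_group H" and "f \<in> I \<rightarrow> carrier (G \<times>\<times> H)"
  shows "finprod (G \<times>\<times> H) f I = (finprod G (fst \<circ> f) I, finprod H (snd \<circ> f) I)"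
proof -
  have "fst \<in> hom (G \<times>\<times> H) G" and "snd \<in> hom (G \<times>\<times> H) H"
    by (auto simp: hom_def)
  then show ?thesis
    using hom_finprod[OF comm_group_DirProd[OF assms(1,2)] _ _ assms(3)] assms(1,2)
    by (metis prod.collapse)
qed

lemma finprod_integer_mod_group:
  assumes "f \<in> I \<rightarrow> carrier (integer_mod_group n)"
  shows "finprod (integer_mod_group n) f I = sum f I mod int n"
proof -
  interpret comm_group "integer_mod_group n" by simp
  show ?thesis
  proof (cases "finite I")
    case True
    then show ?thesis using assms
      by (induction I rule: finite_induct) (auto simp: mod_add_right_eq)
  qed simp
qed

lemma finprod_integer_mod_pair:
  "finprod (integer_mod_group n \<times>\<times> integer_mod_group p) (\<lambda>x. (a x mod int n, b x mod int p)) I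
     = (sum a I mod int n, sum b I mod int p)"
  by (subst finprod_DirProd)
     (auto simp: carrier_integer_mod_group finprod_integer_mod_group o_def mod_sum_eq)

lemma MRS_iso:
  assumes "MRS H a b c A \<omega> \<delta>" and "\<psi> \<in> iso H G" and "comm_group H" and "comm_group G"
  shows "MRS G a b c (\<lambda>k i j. \<psi> (A k i j)) (\<psi> \<omega>) (\<psi> \<delta>)"
proof -
  let ?S = "{..<c} \<times> {..<a} \<times> {..<b}"
  have hom: "\<psi> \<in> hom H G" and bij_\<psi>: "bij_betw \<psi> (carrier H) (carrier G)"
    using assms(2) by (auto simp: iso_def)
  have card: "card (carrier H) = a * b * c"
    and bij: "bij_betw (\<lambda>(k, i, j). A k i j) ?S (carrier H)"
    and rows: "\<And>k i. k < c \<Longrightarrow> i < a \<Longrightarrow> finprod H (\<lambda>j. A k i j) {..<b} = \<omega>"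
    and cols: "\<And>k j. k < c \<Longrightarrow> j < b \<Longrightarrow> finprod H (\<lambda>i. A k i j) {..<a} = \<delta>"
    using assms(1) by (auto simp: MRS_def)
  have entry_closed: "A k i j \<in> carrier H" if "k < c" "i < a" "j < b" for k i j
    using bij_betw_apply[OF bij] that by auto
  have "bij_betw (\<lambda>(k, i, j). \<psi> (A k i j)) ?S (carrier G)"
    using bij_betw_trans[OF bij bij_\<psi>] by (simp add: comp_def case_prod_unfold)
  moreover have "card (carrier G) = a * b * c"
    using bij_betw_same_card[OF bij_\<psi>] card by simp
  moreover have "finprod G (\<lambda>j. \<psi> (A k i j)) {..<b} = \<psi> \<omega>" if "k < c" "i < a" for k i
    using hom_finprod[OF assms(3,4) hom, of "\<lambda>j. A k i j" "{..<b}"] rows that entry_closed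
    by (simp add: comp_def)
  moreover have "finprod G (\<lambda>i. \<psi> (A k i j)) {..<a} = \<psi> \<delta>" if "k < c" "j < b" for k j
    using hom_finprod[OF assms(3,4) hom, of "\<lambda>i. A k i j" "{..<a}"] cols that entry_closed
    by (simp add: comp_def)
  ultimately show ?thesis
    by (simp add: MRS_def)
qed

text \<open>For odd r, crt_lift r a b represents the residue class mod 2r that is a mod r and b mod 2.\<close>

definition crt_lift :: "int \<Rightarrow> int \<Rightarrow> int \<Rightarrow> int" where
  "crt_lift r a b = (r + 1) * a + r * b"

lemma sum_crt_lift: "(\<Sum>x\<in>I. crt_lift r (a x) (b x)) = crt_lift r (sum a I) (sum b I)"
  by (simp add: crt_lift_def sum.distrib sum_distrib_left)

lemma crt_lift_diff: "crt_lift r a b - crt_lift r a' b' = crt_lift r (a - a') (b - b')"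
  by (simp add: crt_lift_def algebra_simps)

lemma crt_lift_dvd_iff:
  assumes "odd r"
  shows "2 * r dvd crt_lift r a b \<longleftrightarrow> r dvd a \<and> 2 dvd b"
proof -
  obtain q where r: "r = 2 * q + 1"
    using assms oddE by blast
  have "crt_lift r a b = a + (a + b) * r"
    by (simp add: crt_lift_def algebra_simps)
  then have dvd_r: "r dvd crt_lift r a b \<longleftrightarrow> r dvd a"
    by simp
  have "crt_lift r a b = b + 2 * ((q + 1) * a + q * b)"
    by (simp add: crt_lift_def r algebra_simps)
  then have dvd_2: "2 dvd crt_lift r a b \<longleftrightarrow> 2 dvd b"
    by (simp add: dvd_add_left_iff)
  have "coprime r 2"
    using assms by simp
  then have "2 * r dvd crt_lift r a b \<longleftrightarrow> r dvd crt_lift r a b \<and> 2 dvd crt_lift r a b"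
    using divides_mult[of r 2] by (auto dest: dvd_mult_left dvd_mult_right simp: mult.commute)
  then show ?thesis
    using dvd_r dvd_2 by simp
qed

lemma crt_lift_mod_eq_iff:
  assumes "odd r"
  shows "crt_lift r a b mod (2 * r) = crt_lift r a' b' mod (2 * r)
         \<longleftrightarrow> a mod r = a' mod r \<and> b mod 2 = b' mod 2"
  using crt_lift_dvd_iff[OF assms] by (simp add: mod_eq_dvd_iff crt_lift_diff)

lemma odd_dvd_sum_lessThan:
  assumes "odd r"
  shows "int r dvd (\<Sum>i<r. int i)"
proof -
  obtain m where r: "r = Suc (2 * m)"
    using assms oddE by fastforce
  have "2 * (\<Sum>i<r. int i) = 2 * (int m * int r)"
    using double_gauss_sum[where 'a = int, of "2 * m"]
    by (simp add: r lessThan_Suc_atMost atLeast0AtMost algebra_simps)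
  then show ?thesis
    by simp
qed

definition row_type :: "nat \<Rightarrow> nat \<Rightarrow> nat" where
  "row_type r i = (if i = 0 then 0 else if i = 1 then 1 else if i = r - 1 then 2
                   else if 2 * i < r then 3 else 4)"

definition partner_type :: "nat \<Rightarrow> nat" where
  "partner_type s = [0, 2, 1, 4, 3] ! s"

lemma row_type_less: "row_type r i < 5"
  by (simp add: row_type_def)

lemma partner_type_less: "s < 5 \<Longrightarrow> partner_type s < 5"
  by (auto simp: partner_type_def less_Suc_eq numeral_eq_Suc)

lemma partner_type_partner_type: "s < 5 \<Longrightarrow> partner_type (partner_type s) = s"
  by (auto simp: partner_type_def less_Suc_eq numeral_eq_Suc)

lemma row_type_complement:
  assumes "odd r" and "0 < i" and "i < r"
  shows "row_type r (r - i) = partner_type (row_type r i)"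
proof -
  have "r \<noteq> 2" and "2 * i \<noteq> r"
    using assms(1) by auto
  then consider "i = 1" | "i = r - 1" | "1 < i" "i < r - 1" "2 * i < r" | "1 < i" "i < r - 1" "r < 2 * i"
    using assms(2,3) by linarith
  then show ?thesis
    by cases (use \<open>r \<noteq> 2\<close> assms in \<open>auto simp: row_type_def partner_type_def\<close>)
qed

lemma row_type_of_dvd_add:
  assumes "odd r" and "i < r" and "i' < r" and "r dvd i + i'"
  shows "row_type r i' = partner_type (row_type r i)"
proof -
  obtain q where q: "i + i' = r * q"
    using assms(4) by (rule dvdE)
  have "q < 2"
    using q assms(2,3) by (metis add_less_mono mult_2_right nat_mult_less_cancel_disj)
  then consider "i + i' = 0" | "i + i' = r"
    using q by (cases q) auto
  then show ?thesis
  proof cases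
    case 1
    then show ?thesis
      by (simp add: row_type_def partner_type_def)
  next
    case 2
    then have "i' = r - i" and "0 < i"
      using assms(3) by auto
    then show ?thesis
      using row_type_complement[OF assms(1)] assms(2) by simp
  qed
qed

lemma sum_row_type:
  fixes f :: "nat \<Rightarrow> 'a :: comm_semiring_1"
  assumes "odd r" and "3 \<le> r"
  shows "(\<Sum>i<r. f (row_type r i)) = f 0 + f 1 + f 2 + of_nat ((r - 3) div 2) * (f 3 + f 4)"
proof -
  obtain m where r: "r = 2 * m + 1"
    using assms(1) oddE by blast
  with assms(2) have m: "1 \<le> m"
    by simp
  let ?g = "\<lambda>i. f (row_type r i)"
  have low: "{0..<m+1} = insert 0 (insert 1 {2..<m+1})"
    using m by auto
  have const: "sum ?g {a..<b} = of_nat (b - a) * f s"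
    if "\<And>i. a \<le> i \<Longrightarrow> i < b \<Longrightarrow> row_type r i = s" for a b s
    using that by simp
  have "(\<Sum>i<r. ?g i) = (\<Sum>i\<in>{0..<2*m}. ?g i) + ?g (2 * m)"
    by (simp add: r lessThan_atLeast0)
  also have "(\<Sum>i\<in>{0..<2*m}. ?g i) = (\<Sum>i\<in>{0..<m+1}. ?g i) + (\<Sum>i\<in>{m+1..<2*m}. ?g i)"
    by (rule sum.atLeastLessThan_concat[symmetric]) (use m in auto)
  also have "(\<Sum>i\<in>{0..<m+1}. ?g i) = ?g 0 + ?g 1 + (\<Sum>i\<in>{2..<m+1}. ?g i)"
    unfolding low by (simp add: add.assoc)
  also have "(\<Sum>i\<in>{2..<m+1}. ?g i) = of_nat (m - 1) * f 3"
    by (subst const[where s = 3]) (auto simp: row_type_def r)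
  also have "(\<Sum>i\<in>{m+1..<2*m}. ?g i) = of_nat (m - 1) * f 4"
    by (subst const[where s = 4]) (auto simp: row_type_def r)
  finally have "(\<Sum>i<r. ?g i) = ?g 0 + ?g 1 + of_nat (m - 1) * f 3 + of_nat (m - 1) * f 4 + ?g (2 * m)" .
  moreover have "row_type r 0 = 0" "row_type r 1 = 1" "row_type r (2 * m) = 2"
    using m by (auto simp: row_type_def r)
  moreover have "(r - 3) div 2 = m - 1"
    by (simp add: r)
  ultimately show ?thesis
    by (simp add: algebra_simps)
qed

text \<open>The integer representatives, not just their residues, are chosen so that the column
  relations of the templates hold exactly in Z.\<close>

definition tab2 :: "nat \<Rightarrow> nat \<Rightarrow> nat \<Rightarrow> int" where
  "tab2 s k j =
     [[[0, 0, 1, 0, 0, 1, 0, 0], [1, 1, 1, 0, 1, 1, 0, 1]],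
      [[1, 0, 0, 0, 1, 1, 1, 0], [1, 0, 1, 1, 0, 0, 0, 1]],
      [[-1, 0, -1, 0, -1, -2, -1, 0], [-2, -1, -2, -1, -1, -1, 0, -2]],
      [[0, 0, 1, 0, 1, 1, 0, 1], [1, 1, 0, 1, 0, 0, 0, 1]],
      [[0, 0, -1, 0, -1, -1, 0, -1], [-1, -1, 0, -1, 0, 0, 0, -1]]] ! s ! k ! j"

definition tab8 :: "nat \<Rightarrow> nat \<Rightarrow> nat \<Rightarrow> int" where
  "tab8 s k j =
     [[[1, 7, 6, 5, 2, 1, 4, 6], [0, 5, 2, 0, 4, 3, 3, 7]],
      [[2, 1, 3, 6, 2, 0, 4, 6], [6, 5, 7, 5, 1, 4, 3, 1]],
      [[-3, -8, -9, -11, -4, -1, -8, -12], [-6, -10, -9, -5, -5, -7, -6, -8]],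
      [[2, 6, 5, 0, 5, 4, 3, 7], [2, 6, 3, 0, 4, 7, 1, 1]],
      [[-2, -6, -5, 0, -5, -4, -3, -7], [-2, -6, -3, 0, -4, -7, -1, -1]]] ! s ! k ! j"

definition template :: "nat \<Rightarrow> nat \<Rightarrow> nat \<Rightarrow> int \<times> int" where
  "template s k j = (tab2 s k j mod 2, tab8 s k j mod 8)"

definition paired_template :: "nat \<Rightarrow> nat \<times> nat \<Rightarrow> int \<times> int" where
  "paired_template s = (\<lambda>(k, j). template (if j < 4 then s else partner_type s) k j)"

lemma template_row_sums:
  "\<forall>s<5. \<forall>k<2. 2 dvd (\<Sum>j<8. tab2 s k j) \<and> 8 dvd (\<Sum>j<8. tab8 s k j)"
  unfolding tab2_def tab8_def by code_simp

lemma template_column_relations: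
  "\<forall>k<2. \<forall>j<8. tab2 0 k j + tab2 1 k j + tab2 2 k j = 0 \<and> tab2 3 k j + tab2 4 k j = 0
             \<and> tab8 0 k j + tab8 1 k j + tab8 2 k j = 0 \<and> tab8 3 k j + tab8 4 k j = 0"
  unfolding tab2_def tab8_def by code_simp

lemma inj_on_paired_template:
  assumes "s < 5"
  shows "inj_on (paired_template s) ({..<2} \<times> {..<8})"
proof -
  have "\<forall>s<5. distinct (map (paired_template s) (List.product [0..<2] [0..<8]))"
    unfolding paired_template_def template_def tab2_def tab8_def partner_type_def by code_simp
  then show ?thesis
    using assms by (simp add: distinct_map lessThan_atLeast0)
qed

definition col_sign :: "nat \<Rightarrow> int" where
  "col_sign j = (if j < 4 then 1 else -1)"

lemma sum_col_sign: "(\<Sum>j<8. col_sign j) = 0"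
  by (simp add: col_sign_def eval_nat_numeral)

definition entry :: "nat \<Rightarrow> nat \<Rightarrow> nat \<Rightarrow> nat \<Rightarrow> int \<times> int" where
  "entry r k i j =
     (crt_lift (int r) (col_sign j * int i) (tab2 (row_type r i) k j) mod (2 * int r),
      tab8 (row_type r i) k j mod 8)"

lemma entry_eq_iff:
  assumes "odd r"
  shows "entry r k i j = entry r k' i' j' \<longleftrightarrow>
         col_sign j * int i mod int r = col_sign j' * int i' mod int r \<and>
         template (row_type r i) k j = template (row_type r i') k' j'"
  using crt_lift_mod_eq_iff[of "int r"] assms by (auto simp: entry_def template_def)

lemma entry_eq_same_half:
  assumes "odd r" and "i < r" and "i' < r" and "k < 2" and "k' < 2" and "j < 8" and "j' < 8"
    and "col_sign j = col_sign j'" and "entry r k i j = entry r k' i' j'"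
  shows "k = k' \<and> i = i' \<and> j = j'"
proof -
  have "int r dvd col_sign j * (int i - int i')"
    using assms(8,9) entry_eq_iff[OF assms(1)] by (simp add: mod_eq_dvd_iff right_diff_distrib)
  then have "int r dvd int i - int i'"
    by (auto simp: col_sign_def dvd_diff_commute split: if_splits)
  then have "int i mod int r = int i' mod int r"
    by (simp add: mod_eq_dvd_iff)
  then have i: "i = i'"
    using assms(2,3) by (simp flip: of_nat_mod)
  let ?s = "row_type r i"
  let ?t = "if j < 4 then ?s else partner_type ?s"
  have "template ?s k j = template ?s k' j'"
    using assms(9) entry_eq_iff[OF assms(1)] i by simp
  then have "paired_template ?t (k, j) = paired_template ?t (k', j')"
    using assms(8) row_type_less[of r i]
    by (simp add: paired_template_def col_sign_def partner_type_partner_type split: if_splits)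
  moreover have "?t < 5"
    using row_type_less partner_type_less by simp
  ultimately have "(k, j) = (k', j')"
    using inj_on_paired_template assms(4-7) by (auto dest: inj_onD)
  with i show ?thesis
    by simp
qed

lemma entry_ne_mixed_halves:
  assumes "odd r" and "i < r" and "i' < r" and "k < 2" and "k' < 2" and "j < 4" and "4 \<le> j'"
    and "j' < 8"
  shows "entry r k i j \<noteq> entry r k' i' j'"
proof
  assume eq: "entry r k i j = entry r k' i' j'"
  let ?s = "row_type r i"
  have "int i mod int r = - int i' mod int r"
    using eq entry_eq_iff[OF assms(1)] assms(6,7) by (simp add: col_sign_def)
  then have "r dvd i + i'"
    by (simp add: mod_eq_dvd_iff flip: of_nat_add)
  then have "row_type r i' = partner_type ?s"
    using row_type_of_dvd_add assms(1-3) by blast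
  then have "template ?s k j = template (partner_type ?s) k' j'"
    using eq entry_eq_iff[OF assms(1)] by simp
  then have "paired_template ?s (k, j) = paired_template ?s (k', j')"
    using assms(6,7) by (simp add: paired_template_def)
  then have "(k, j) = (k', j')"
    by (rule inj_onD[OF inj_on_paired_template[OF row_type_less]]) (use assms(4-8) in auto)
  with assms(6,7) show False
    by simp
qed

lemma inj_on_entry:
  assumes "odd r"
  shows "inj_on (\<lambda>(k, i, j). entry r k i j) ({..<2} \<times> {..<r} \<times> {..<8})"
proof (rule inj_onI, clarsimp)
  fix k i j k' i' j'
  assume bounds: "k < 2" "i < r" "j < 8" "k' < 2" "i' < r" "j' < 8"
    and eq: "entry r k i j = entry r k' i' j'"
  consider "col_sign j = col_sign j'" | "j < 4" "4 \<le> j'" | "j' < 4" "4 \<le> j"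
    by (fastforce simp: col_sign_def)
  then show "k = k' \<and> i = i' \<and> j = j'"
  proof cases
    case 1
    then show ?thesis
      using entry_eq_same_half assms bounds eq by blast
  next
    case 2
    then show ?thesis
      using entry_ne_mixed_halves assms bounds eq by blast
  next
    case 3
    then show ?thesis
      using entry_ne_mixed_halves assms bounds eq[symmetric] by blast
  qed
qed

lemma bij_betw_entry:
  assumes "odd r"
  shows "bij_betw (\<lambda>(k, i, j). entry r k i j) ({..<2} \<times> {..<r} \<times> {..<8})
           (carrier (integer_mod_group (2 * r) \<times>\<times> integer_mod_group 8))"
proof -
  let ?S = "{..<2} \<times> {..<r} \<times> {..<8}"
  let ?f = "\<lambda>(k, i, j). entry r k i j"
  have "0 < r"
    using assms by (rule odd_pos)
  then have carrier: "carrier (integer_mod_group (2 * r) \<times>\<times> integer_mod_group 8) = {0..<2 * int r} \<times> {0..<8::int}"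
    by (auto simp: carrier_integer_mod_group)
  have "?f ` ?S \<subseteq> {0..<2 * int r} \<times> {0..<8::int}"
    using \<open>0 < r\<close> by (auto simp: entry_def)
  moreover have "card (?f ` ?S) = card ({0..<2 * int r} \<times> {0..<8::int})"
    using card_image[OF inj_on_entry[OF assms]] by (simp add: card_cartesian_product)
  ultimately have "?f ` ?S = {0..<2 * int r} \<times> {0..<8::int}"
    by (intro card_subset_eq) auto
  with inj_on_entry[OF assms] show ?thesis
    unfolding carrier bij_betw_def by simp
qed

lemma finprod_entry_row:
  assumes "odd r" and "k < 2"
  shows "finprod (integer_mod_group (2 * r) \<times>\<times> integer_mod_group 8) (\<lambda>j. entry r k i j) {..<8}
           = (0, 0)"
proof -
  let ?s = "row_type r i"
  have "2 dvd (\<Sum>j<8. tab2 ?s k j)" and tab8: "8 dvd (\<Sum>j<8. tab8 ?s k j)"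
    using template_row_sums row_type_less assms(2) by blast+
  moreover have "(\<Sum>j<8. col_sign j * int i) = 0"
    using sum_col_sign by (simp flip: sum_distrib_right)
  ultimately have "2 * int r dvd (\<Sum>j<8. crt_lift (int r) (col_sign j * int i) (tab2 ?s k j))"
    using assms(1) by (simp add: sum_crt_lift crt_lift_dvd_iff)
  with tab8 show ?thesis
    by (simp add: entry_def finprod_integer_mod_pair[of "2 * r" 8, simplified])
qed

lemma finprod_entry_column:
  assumes "odd r" and "3 \<le> r" and "k < 2" and "j < 8"
  shows "finprod (integer_mod_group (2 * r) \<times>\<times> integer_mod_group 8) (\<lambda>i. entry r k i j) {..<r}
           = (0, 0)"
proof -
  have "(\<Sum>i<r. tab2 (row_type r i) k j) = 0" and tab8: "(\<Sum>i<r. tab8 (row_type r i) k j) = 0"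
    using sum_row_type[OF assms(1,2), of "\<lambda>s. tab2 s k j"] sum_row_type[OF assms(1,2), of "\<lambda>s. tab8 s k j"]
      template_column_relations assms(3,4) by simp_all
  moreover have "int r dvd (\<Sum>i<r. col_sign j * int i)"
    using odd_dvd_sum_lessThan[OF assms(1)] by (simp flip: sum_distrib_left)
  ultimately have "2 * int r dvd (\<Sum>i<r. crt_lift (int r) (col_sign j * int i) (tab2 (row_type r i) k j))"
    using assms(1) by (simp add: sum_crt_lift crt_lift_dvd_iff)
  with tab8 show ?thesis
    by (simp add: entry_def finprod_integer_mod_pair[of "2 * r" 8, simplified])
qed

lemma MRS_entry:
  assumes "odd r" and "3 \<le> r"
  shows "MRS (integer_mod_group (2 * r) \<times>\<times> integer_mod_group 8) r 8 2 (entry r) (0, 0) (0, 0)"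
proof -
  have "card ({..<2::nat} \<times> {..<r} \<times> {..<8::nat}) = r * 8 * 2"
    by (simp add: card_cartesian_product)
  then show ?thesis
    using bij_betw_entry[OF assms(1)] bij_betw_same_card[OF bij_betw_entry[OF assms(1)]]
      finprod_entry_row[OF assms(1)] finprod_entry_column[OF assms]
    by (simp add: MRS_def)
qed

theorem lemma4p8:
  fixes G :: "('g, 'm) monoid_scheme" and r :: nat
  assumes "odd r" and "r \<ge> 3"
    and "comm_group G"
    and "G \<cong> integer_mod_group (2 * r) \<times>\<times> integer_mod_group 8"
  shows "\<exists>A. MRS G r 8 2 A \<one>\<^bsub>G\<^esub> \<one>\<^bsub>G\<^esub>"
proof -
  let ?H = "integer_mod_group (2 * r) \<times>\<times> integer_mod_group 8"
  have H: "comm_group ?H"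
    by (simp add: comm_group_DirProd)
  obtain \<psi> where \<psi>: "\<psi> \<in> iso ?H G"
    using group.iso_sym[OF comm_group.axioms(2)[OF assms(3)] assms(4)] by (auto simp: is_iso_def)
  have "\<psi> (0, 0) = \<one>\<^bsub>G\<^esub>"
    using hom_one[OF iso_imp_homomorphism[OF \<psi>]] H assms(3) by (simp add: comm_group.axioms(2))
  then show ?thesis
    using MRS_iso[OF MRS_entry[OF assms(1,2)] \<psi> H assms(3)] by auto
qed

end
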